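(* Let $G$ be a $k$-regular graph such that $\overline{G}$ is Helly, and let $T$ be a cotriangle in $G$. Then there are at least $k$ vertices of $G$ that are adjacent to $T$.
   Context: All graphs are finite and simple. A clique is a maximal set of pairwise adjacent vertices. A collection of sets has the Helly property if every subcollection whose members pairwise intersect has nonempty total intersection. A graph is Helly if its collection of cliques has the Helly property. A cotriangle in $G$ is an independent set of three vertices of $G$. A vertex $x$ of $G$ is adjacent to a cotriangle $T$ if $x$ is adjacent in $G$ to at least two vertices of $T$. *)

theory Defs
  imports Main
begin

definition simple_graph :: "'a set \<Rightarrow> ('a \<Rightarrow> 'a \<Rightarrow> bool) \<Rightarrow> bool" where
  "simple_graph V E \<longleftrightarrow> finite V \<and> (\<forall>x y. E x y \<longrightarrow> x \<in> V \<and> y \<in> V)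
     \<and> (\<forall>x y. E x y \<longrightarrow> E y x) \<and> (\<forall>x. \<not> E x x)"

definition neighbours :: "'a set \<Rightarrow> ('a \<Rightarrow> 'a \<Rightarrow> bool) \<Rightarrow> 'a \<Rightarrow> 'a set" where
  "neighbours V E x = {y \<in> V. E x y}"

definition regular :: "'a set \<Rightarrow> ('a \<Rightarrow> 'a \<Rightarrow> bool) \<Rightarrow> nat \<Rightarrow> bool" where
  "regular V E k \<longleftrightarrow> (\<forall>x\<in>V. card (neighbours V E x) = k)"

definition compl_edges :: "'a set \<Rightarrow> ('a \<Rightarrow> 'a \<Rightarrow> bool) \<Rightarrow> 'a \<Rightarrow> 'a \<Rightarrow> bool" where
  "compl_edges V E x y \<longleftrightarrow> x \<in> V \<and> y \<in> V \<and> x \<noteq> y \<and> \<not> E x y"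

definition complete_set :: "'a set \<Rightarrow> ('a \<Rightarrow> 'a \<Rightarrow> bool) \<Rightarrow> 'a set \<Rightarrow> bool" where
  "complete_set V E C \<longleftrightarrow> C \<subseteq> V \<and> (\<forall>x\<in>C. \<forall>y\<in>C. x \<noteq> y \<longrightarrow> E x y)"

definition is_clique :: "'a set \<Rightarrow> ('a \<Rightarrow> 'a \<Rightarrow> bool) \<Rightarrow> 'a set \<Rightarrow> bool" where
  "is_clique V E C \<longleftrightarrow> complete_set V E C \<and>
     (\<forall>D. complete_set V E D \<and> C \<subseteq> D \<longrightarrow> D = C)"

definition helly_family :: "'a set set \<Rightarrow> bool" where
  "helly_family \<F> \<longleftrightarrow> (\<forall>\<S> \<subseteq> \<F>. (\<forall>A\<in>\<S>. \<forall>B\<in>\<S>. A \<inter> B \<noteq> {}) \<longrightarrow> \<Inter>\<S> \<noteq> {})"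

definition helly_graph :: "'a set \<Rightarrow> ('a \<Rightarrow> 'a \<Rightarrow> bool) \<Rightarrow> bool" where
  "helly_graph V E \<longleftrightarrow> helly_family {C. is_clique V E C}"

definition cotriangle :: "'a set \<Rightarrow> ('a \<Rightarrow> 'a \<Rightarrow> bool) \<Rightarrow> 'a set \<Rightarrow> bool" where
  "cotriangle V E T \<longleftrightarrow> T \<subseteq> V \<and> card T = 3 \<and> (\<forall>x\<in>T. \<forall>y\<in>T. \<not> E x y)"

definition adjacent_to_cotriangle :: "'a set \<Rightarrow> ('a \<Rightarrow> 'a \<Rightarrow> bool) \<Rightarrow> 'a set \<Rightarrow> 'a \<Rightarrow> bool" where
  "adjacent_to_cotriangle V E T x \<longleftrightarrow> x \<in> V \<and> card {t \<in> T. E x t} \<ge> 2"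

end

theory Submission
  imports Defs
begin

text \<open>In the complement \<open>H\<close> of \<open>G\<close>, any two cliques containing at least two vertices of the
  cotriangle \<open>T\<close> meet, since two 2-subsets of a 3-set meet. By the Helly property all such
  cliques share a vertex \<open>u\<close>. Every \<open>G\<close>-neighbour \<open>y\<close> of \<open>u\<close> is adjacent to \<open>T\<close>: otherwise \<open>y\<close>
  is \<open>G\<close>-nonadjacent to two vertices \<open>p, q\<close> of \<open>T\<close>, so \<open>{p, q, y}\<close> extends to an \<open>H\<close>-clique,
  which then contains \<open>u\<close>, contradicting that \<open>u\<close> and \<open>y\<close> are adjacent in \<open>G\<close>. Hence the \<open>k\<close>
  neighbours of \<open>u\<close> are all adjacent to \<open>T\<close>.\<close>

lemma complete_set_extends_to_clique:
  assumes "finite V" "complete_set V R A"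
  obtains C where "is_clique V R C" "A \<subseteq> C"
proof -
  let ?S = "{D. complete_set V R D \<and> A \<subseteq> D}"
  have "finite ?S"
    by (rule finite_subset[of _ "Pow V"]) (auto simp: complete_set_def assms(1))
  moreover have "A \<in> ?S" using assms(2) by auto
  ultimately obtain C where C: "C \<in> ?S" "\<forall>D\<in>?S. C \<le> D \<longrightarrow> C = D"
    using finite_has_maximal2[of ?S A] by blast
  then have "is_clique V R C" unfolding is_clique_def by auto
  then show ?thesis using that C by blast
qed

lemma two_le_card_if_distinct:
  assumes "finite A" "p \<in> A" "q \<in> A" "p \<noteq> q"
  shows "2 \<le> card A"
proof -
  have "card {p, q} \<le> card A" using assms by (intro card_mono) auto
  then show ?thesis using assms(4) by simp
qed

lemma subsets_intersect_if_card_sum_gt: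
  assumes "finite T" "X \<subseteq> T" "Y \<subseteq> T" "card T < card X + card Y"
  shows "X \<inter> Y \<noteq> {}"
proof
  assume disjoint: "X \<inter> Y = {}"
  have "finite X" "finite Y" using assms finite_subset by auto
  then have "card (X \<union> Y) = card X + card Y" using disjoint by (rule card_Un_disjoint)
  moreover have "card (X \<union> Y) \<le> card T" using assms by (intro card_mono) auto
  ultimately show False using assms(4) by linarith
qed

lemma two_outside_if_card_three:
  assumes "card T = 3" "card {t \<in> T. P t} < 2"
  obtains p q where "p \<in> T" "q \<in> T" "p \<noteq> q" "\<not> P p" "\<not> P q"
proof -
  have "finite T" using assms(1) by (intro card_ge_0_finite) simp
  then have "card {t \<in> T. P t} + card {t \<in> T. \<not> P t} = card T"
    by (subst card_Un_disjoint[symmetric]) (auto intro: arg_cong[where f = card])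
  then have "2 \<le> card {t \<in> T. \<not> P t}" using assms by linarith
  then obtain S where "S \<subseteq> {t \<in> T. \<not> P t}" "card S = 2"
    using obtain_subset_with_card_n by metis
  then obtain p q where "p \<noteq> q" "S = {p, q}" by (auto simp: card_2_iff)
  then show ?thesis using that \<open>S \<subseteq> _\<close> by blast
qed

context
  fixes V :: "'a set" and E :: "'a \<Rightarrow> 'a \<Rightarrow> bool" and T :: "'a set"
  assumes graph: "simple_graph V E"
    and cotri: "cotriangle V E T"
begin

lemma compl_clique_through_two_cotriangle_vertices:
  assumes "p \<in> T" "q \<in> T" "y \<in> V" "\<not> E y p" "\<not> E y q"
  obtains C where "is_clique V (compl_edges V E) C" "{p, q, y} \<subseteq> C"
proof (rule complete_set_extends_to_clique)
  show "finite V" using graph unfolding simple_graph_def by blast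
  show "complete_set V (compl_edges V E) {p, q, y}"
    using assms graph cotri
    unfolding complete_set_def compl_edges_def simple_graph_def cotriangle_def by blast
qed (rule that)

lemma helly_compl_common_vertex:
  assumes "helly_graph V (compl_edges V E)"
  obtains u where "u \<in> V"
    "\<And>C. is_clique V (compl_edges V E) C \<Longrightarrow> 2 \<le> card (C \<inter> T) \<Longrightarrow> u \<in> C"
proof -
  let ?F = "{C. is_clique V (compl_edges V E) C \<and> 2 \<le> card (C \<inter> T)}"
  have TV: "T \<subseteq> V" and cardT: "card T = 3" and indep: "\<forall>x\<in>T. \<forall>y\<in>T. \<not> E x y"
    using cotri unfolding cotriangle_def by auto
  then have finT: "finite T" by (intro card_ge_0_finite) simp
  have "\<forall>A\<in>?F. \<forall>B\<in>?F. A \<inter> B \<noteq> {}"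
  proof (intro ballI)
    fix A B assume "A \<in> ?F" "B \<in> ?F"
    then have "(A \<inter> T) \<inter> (B \<inter> T) \<noteq> {}"
      by (intro subsets_intersect_if_card_sum_gt[OF finT]) (auto simp: cardT)
    then show "A \<inter> B \<noteq> {}" by blast
  qed
  then have "\<Inter>?F \<noteq> {}"
    using assms[unfolded helly_graph_def helly_family_def, rule_format, of ?F] by blast
  then obtain u where u: "\<And>C. C \<in> ?F \<Longrightarrow> u \<in> C" by blast
  obtain a b c where "T = {a, b, c}" "a \<noteq> b"
    using cardT card_3_iff by metis
  then have ab: "a \<in> T" "b \<in> T" "a \<noteq> b" by auto
  \<comment> \<open>Taking \<open>y = a\<close>: the \<open>H\<close>-edge \<open>ab\<close> lies in an \<open>H\<close>-clique, so \<open>u\<close> exists in \<open>V\<close>.\<close>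
  obtain C where C: "is_clique V (compl_edges V E) C" "{a, b, a} \<subseteq> C"
    using compl_clique_through_two_cotriangle_vertices[of a b a] ab TV indep by blast
  then have "2 \<le> card (C \<inter> T)"
    using ab finT two_le_card_if_distinct[of "C \<inter> T" a b] by auto
  then have "u \<in> C" using C u by blast
  then have "u \<in> V" using C unfolding is_clique_def complete_set_def by auto
  then show ?thesis using that u by blast
qed

lemma neighbour_of_common_vertex_adjacent_to_cotriangle:
  assumes common: "\<And>C. is_clique V (compl_edges V E) C \<Longrightarrow> 2 \<le> card (C \<inter> T) \<Longrightarrow> u \<in> C"
    and "E u y"
  shows "adjacent_to_cotriangle V E T y"
proof (rule ccontr)
  have yV: "y \<in> V" and "u \<noteq> y"
    using \<open>E u y\<close> graph unfolding simple_graph_def by auto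
  have cardT: "card T = 3" using cotri unfolding cotriangle_def by auto
  then have finT: "finite T" by (intro card_ge_0_finite) simp
  assume "\<not> adjacent_to_cotriangle V E T y"
  then have "card {t \<in> T. E y t} < 2" using yV unfolding adjacent_to_cotriangle_def by auto
  then obtain p q where pq: "p \<in> T" "q \<in> T" "p \<noteq> q" "\<not> E y p" "\<not> E y q"
    using two_outside_if_card_three[OF cardT] by blast
  then obtain C where C: "is_clique V (compl_edges V E) C" "{p, q, y} \<subseteq> C"
    using yV compl_clique_through_two_cotriangle_vertices by blast
  then have "2 \<le> card (C \<inter> T)"
    using pq finT two_le_card_if_distinct[of "C \<inter> T" p q] by auto
  then have "u \<in> C" using C common by blast
  then have "compl_edges V E u y"
    using C \<open>u \<noteq> y\<close> unfolding is_clique_def complete_set_def by auto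
  then show False using \<open>E u y\<close> unfolding compl_edges_def by blast
qed

end

theorem mainTheorem4:
  fixes V :: "'a set" and E :: "'a \<Rightarrow> 'a \<Rightarrow> bool" and k :: nat and T :: "'a set"
  assumes "simple_graph V E"
    and "regular V E k"
    and "helly_graph V (compl_edges V E)"
    and "cotriangle V E T"
  shows "card {x \<in> V. adjacent_to_cotriangle V E T x} \<ge> k"
proof -
  obtain u where "u \<in> V" and common:
    "\<And>C. is_clique V (compl_edges V E) C \<Longrightarrow> 2 \<le> card (C \<inter> T) \<Longrightarrow> u \<in> C"
    using helly_compl_common_vertex[OF assms(1,4,3)] by blast
  have "neighbours V E u \<subseteq> {x \<in> V. adjacent_to_cotriangle V E T x}"
    using neighbour_of_common_vertex_adjacent_to_cotriangle[OF assms(1,4) common]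
    unfolding neighbours_def by blast
  then have "card (neighbours V E u) \<le> card {x \<in> V. adjacent_to_cotriangle V E T x}"
    using assms(1) unfolding simple_graph_def by (intro card_mono) auto
  then show ?thesis using assms(2) \<open>u \<in> V\<close> unfolding regular_def by auto
qed

end
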